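(* Let $n\ge3$. For the $\mathrm{GL}$-orbit $O_6$, the stabilizer $H$ of a point has component group $H/H^0\cong\mathbb Z/2\mathbb Z$, while for every other $\mathrm{GL}$-orbit $O_i$ ($i\ne6$) the stabilizer of a point is connected.
   Context: Let $A,B$ be $2$-dimensional complex vector spaces with bases $a_1,a_2$ and $b_1,b_2$, $C$ an $n$-dimensional complex vector space with basis $c_1,\dots,c_n$, $V=A\otimes B\otimes C$ with the action of $\mathrm{GL}=\mathrm{GL}(A)\times\mathrm{GL}(B)\times\mathrm{GL}(C)$; write $a_ib_jc_k=a_i\otimes b_j\otimes c_k$. The $\mathrm{GL}$-orbits are $O_0,\dots,O_9$ ($O_9$ only for $n\ge4$) with representatives $O_0:0$; $O_1: a_1b_1c_1$; $O_2: a_1b_1c_1+a_2b_2c_1$; $O_3: a_1b_1c_1+a_1b_2c_2$; $O_4: a_1b_1c_1+a_2b_1c_2$; $O_5: a_1b_1c_1+a_1b_2c_2+a_2b_1c_2$; $O_6: a_1b_1c_1+a_2b_2c_2$; $O_7: a_1b_1c_1+a_1b_2c_3+a_2b_1c_2$; $O_8: a_1b_1c_1+a_1b_2c_2+a_2b_1c_2+a_2b_2c_3$; $O_9: a_1b_1c_1+a_1b_2c_3+a_2b_1c_2+a_2b_2c_4$. $H^0$ denotes the identity component of $H$. *)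

theory Defs
  imports "HOL-Analysis.Analysis" "HOL-Algebra.Elementary_Groups"
begin

text \<open>Tensors in V = A (x) B (x) C, with dim A = dim B = 2 and dim C = CARD('n),
  represented by their coordinate arrays with respect to the bases
  a_1,a_2 (indices 0,1 :: 2), b_1,b_2 (indices 0,1 :: 2) and a basis of C indexed by 'n.\<close>

type_synonym 'n tensor = "2 \<Rightarrow> 2 \<Rightarrow> 'n \<Rightarrow> complex"

type_synonym 'n glelem = "(complex^2^2) \<times> (complex^2^2) \<times> (complex^'n^'n)"

definition GLset :: "'n::finite glelem set" where
  "GLset = {(g, h, k). invertible g \<and> invertible h \<and> invertible k}"

definition act :: "'n::finite glelem \<Rightarrow> 'n tensor \<Rightarrow> 'n tensor" where
  "act x T = (case x of (g, h, k) \<Rightarrow>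
     (\<lambda>i j l. \<Sum>i'\<in>UNIV. \<Sum>j'\<in>UNIV. \<Sum>l'\<in>UNIV.
        g $ i $ i' * h $ j $ j' * k $ l $ l' * T i' j' l'))"

definition GL_orbit :: "'n::finite tensor \<Rightarrow> 'n tensor set" where
  "GL_orbit T = {act x T | x. x \<in> GLset}"

definition stab :: "'n::finite tensor \<Rightarrow> 'n glelem set" where
  "stab T = {x \<in> GLset. act x T = T}"

definition stab_group :: "'n::finite tensor \<Rightarrow> 'n glelem monoid" where
  "stab_group T = \<lparr> carrier = stab T,
     mult = (\<lambda>(g, h, k) (g', h', k'). (g ** g', h ** h', k ** k')),
     one = (mat 1, mat 1, mat 1) \<rparr>"

definition identity_component :: "'n::finite glelem set \<Rightarrow> 'n glelem set" where
  "identity_component H = connected_component_set H (mat 1, mat 1, mat 1)"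

text \<open>Sum of the distinct pure tensors a_i b_j c_l for (i,j,l) in the given list
  (a_1,a_2 \<mapsto> 0,1; b_1,b_2 \<mapsto> 0,1; c_l \<mapsto> c l).\<close>
definition sum_pure :: "(2 \<times> 2 \<times> 'n) list \<Rightarrow> 'n tensor" where
  "sum_pure l = (\<lambda>x y z. if (x, y, z) \<in> set l then 1 else 0)"

text \<open>Orbit representatives O_0,...,O_9; c enumerates the basis c_1,...,c_n of C.\<close>
definition rep :: "(nat \<Rightarrow> 'n) \<Rightarrow> nat \<Rightarrow> 'n tensor" where
  "rep c m = sum_pure
    (if m = 0 then []
     else if m = 1 then [(0, 0, c 1)]
     else if m = 2 then [(0, 0, c 1), (1, 1, c 1)]
     else if m = 3 then [(0, 0, c 1), (0, 1, c 2)]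
     else if m = 4 then [(0, 0, c 1), (1, 0, c 2)]
     else if m = 5 then [(0, 0, c 1), (0, 1, c 2), (1, 0, c 2)]
     else if m = 6 then [(0, 0, c 1), (1, 1, c 2)]
     else if m = 7 then [(0, 0, c 1), (0, 1, c 3), (1, 0, c 2)]
     else if m = 8 then [(0, 0, c 1), (0, 1, c 2), (1, 0, c 2), (1, 1, c 3)]
     else [(0, 0, c 1), (0, 1, c 3), (1, 0, c 2), (1, 1, c 4)])"

end

(*
  Stabilisers of points in one orbit are conjugate, by a conjugation that is at the same time a
  group isomorphism and a homeomorphism, so it suffices to look at the listed representatives T.
  With u = g^-1 and v = h^-1, an element (g, h, k) fixes T iff act_C k T = act_A u (act_B v T).
  The nonzero C-slices of each representative are linearly independent, so such a k exists iff the
  C-slices of the transformed tensor lie in their span; then the columns of k belonging to these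
  slices are forced and depend polynomially on (u, v), while the other columns are free.

  For every representative other than O_6, each such "absorbable" pair (u, v) is joined to (I, I)
  by a polynomial curve of absorbable pairs. Extending it linearly in k gives a polynomial curve
  through the stabiliser, defined outside the finitely many zeros of a nonzero polynomial
  (a product of determinants); the complex plane minus a finite set is connected, hence so is the
  stabiliser.

  For O_6 = a_1 b_1 c_1 + a_2 b_2 c_2 the absorbable pairs are either both diagonal or both
  antidiagonal. The diagonal part is connected by the same argument, and it is the kernel of the
  continuous homomorphism onto Z/2 recording whether g swaps a_1 and a_2; the swap
  a_1 <-> a_2, b_1 <-> b_2, c_1 <-> c_2 shows that it is onto. A connected, open and closed
  subgroup is the identity component, so the component group is Z/2.
*)

theory Submission
  imports Defs
begin

section \<open>The index type 2 and 2\<times>2 matrices\<close>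

lemma exhaust_2': "(i::2) = 0 \<or> i = 1"
proof -
  have "(2::2) = 0" by simp
  then show ?thesis using exhaust_2[of i] by metis
qed

lemma UNIV_2': "(UNIV::2 set) = {0, 1}"
  using exhaust_2' by auto

lemma forall_2': "(\<forall>i::2. P i) \<longleftrightarrow> P 0 \<and> P 1"
  using exhaust_2' by metis

lemma sum_2': "sum f (UNIV::2 set) = f 0 + f 1"
  by (simp add: UNIV_2')

lemma det_2': "det (A::'a::comm_ring_1^2^2) = A$0$0 * A$1$1 - A$0$1 * A$1$0"
proof -
  have two: "(2::2) = 0" by simp
  show ?thesis unfolding det_2 two by (simp add: mult.commute)
qed

lemma mat2_eq_iff:
  "(A::'a^2^2) = B \<longleftrightarrow> A$0$0 = B$0$0 \<and> A$0$1 = B$0$1 \<and> A$1$0 = B$1$0 \<and> A$1$1 = B$1$1"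
  by (auto simp: vec_eq_iff forall_2')

lemma matrix_matrix_mult_2':
  "((A::'a::comm_semiring_1^2^2) ** B) $ i $ j = A$i$0 * B$0$j + A$i$1 * B$1$j"
  by (simp add: matrix_matrix_mult_def sum_2')

lemma mat_1_2' [simp]:
  "(mat 1 :: 'a::zero_neq_one^2^2)$0$0 = 1" "(mat 1 :: 'a^2^2)$0$1 = 0"
  "(mat 1 :: 'a^2^2)$1$0 = 0" "(mat 1 :: 'a^2^2)$1$1 = 1"
  by (simp_all add: mat_def)

definition mat2 :: "'a \<Rightarrow> 'a \<Rightarrow> 'a \<Rightarrow> 'a \<Rightarrow> 'a^2^2" where
  "mat2 a b c d = (\<chi> i j. if i = 0 then (if j = 0 then a else b) else (if j = 0 then c else d))"

lemma mat2_nth [simp]: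
  "mat2 a b c d $ 0 $ 0 = a" "mat2 a b c d $ 0 $ 1 = b"
  "mat2 a b c d $ 1 $ 0 = c" "mat2 a b c d $ 1 $ 1 = d"
  by (simp_all add: mat2_def)

definition inverse2 :: "complex^2^2 \<Rightarrow> complex^2^2" where
  "inverse2 m = mat2 (m$1$1 / det m) (- m$0$1 / det m) (- m$1$0 / det m) (m$0$0 / det m)"

lemma inverse2_nth [simp]:
  "inverse2 m $0$0 = m$1$1 / det m" "inverse2 m $0$1 = - m$0$1 / det m"
  "inverse2 m $1$0 = - m$1$0 / det m" "inverse2 m $1$1 = m$0$0 / det m"
  by (simp_all add: inverse2_def)

lemma inverse2_left: "det m \<noteq> 0 \<Longrightarrow> inverse2 m ** m = mat 1"
  by (simp add: mat2_eq_iff matrix_matrix_mult_2' divide_simps) (simp add: det_2' algebra_simps)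

lemma inverse2_right: "det m \<noteq> 0 \<Longrightarrow> m ** inverse2 m = mat 1"
  by (simp add: mat2_eq_iff matrix_matrix_mult_2' divide_simps) (simp add: det_2' algebra_simps)

lemma det_inverse2: "det m \<noteq> 0 \<Longrightarrow> det (inverse2 m) = 1 / det m"
proof -
  assume d: "det m \<noteq> 0"
  have "det (inverse2 m) = (m$1$1 * m$0$0 - m$0$1 * m$1$0) / (det m * det m)"
    by (subst det_2') (simp add: divide_simps d)
  also have "m$1$1 * m$0$0 - m$0$1 * m$1$0 = det m"
    by (simp add: det_2' mult.commute)
  finally show ?thesis
    using d by simp
qed

lemma inverse2_inverse2: "det m \<noteq> 0 \<Longrightarrow> inverse2 (inverse2 m) = m"
  by (simp add: mat2_eq_iff det_inverse2)

lemma inverse2_one [simp]: "inverse2 (mat 1) = mat 1"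
  by (simp add: mat2_eq_iff det_2')

section \<open>The action factor by factor\<close>

lemma sum_mat_1_mult: "(\<Sum>j\<in>UNIV. (mat 1 :: 'a::comm_ring_1^'m^'m)$i$j * f j) = f i"
proof -
  have "(\<Sum>j\<in>UNIV. (mat 1 :: 'a^'m^'m)$i$j * f j) = (\<Sum>j\<in>UNIV. if i = j then f j else 0)"
    by (rule sum.cong) (auto simp: mat_def)
  then show ?thesis by simp
qed

definition act_A :: "complex^2^2 \<Rightarrow> 'n tensor \<Rightarrow> 'n tensor" where
  "act_A g T = (\<lambda>i j l. \<Sum>i'\<in>UNIV. g$i$i' * T i' j l)"

definition act_B :: "complex^2^2 \<Rightarrow> 'n tensor \<Rightarrow> 'n tensor" where
  "act_B h T = (\<lambda>i j l. \<Sum>j'\<in>UNIV. h$j$j' * T i j' l)"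

definition act_C :: "complex^'n^'n \<Rightarrow> 'n::finite tensor \<Rightarrow> 'n tensor" where
  "act_C k T = (\<lambda>i j l. \<Sum>l'\<in>UNIV. k$l$l' * T i j l')"

lemma act_eq_act_A_B_C: "act (g, h, k) T = act_A g (act_B h (act_C k T))"
  unfolding act_def act_A_def act_B_def act_C_def
  by (simp add: sum_distrib_left mult.assoc)

lemma act_A_act_B_commute: "act_A g (act_B h T) = act_B h (act_A g T)"
  unfolding act_A_def act_B_def
  by (intro ext) (simp add: sum_distrib_left mult.left_commute, rule sum.swap)

lemma act_A_act_C_commute: "act_A g (act_C k T) = act_C k (act_A g T)"
  unfolding act_A_def act_C_def
  by (intro ext) (simp add: sum_distrib_left mult.left_commute, rule sum.swap)

lemma act_B_act_C_commute: "act_B h (act_C k T) = act_C k (act_B h T)"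
  unfolding act_B_def act_C_def
  by (intro ext) (simp add: sum_distrib_left mult.left_commute, rule sum.swap)

lemma act_A_mult: "act_A (g ** g') T = act_A g (act_A g' T)"
  unfolding act_A_def matrix_matrix_mult_def
  by (intro ext) (simp add: sum_distrib_left sum_distrib_right mult.assoc, rule sum.swap)

lemma act_B_mult: "act_B (h ** h') T = act_B h (act_B h' T)"
  unfolding act_B_def matrix_matrix_mult_def
  by (intro ext) (simp add: sum_distrib_left sum_distrib_right mult.assoc, rule sum.swap)

lemma act_C_mult: "act_C (k ** k') T = act_C k (act_C k' T)"
  unfolding act_C_def matrix_matrix_mult_def
  by (intro ext) (simp add: sum_distrib_left sum_distrib_right mult.assoc, rule sum.swap)

lemma act_A_one [simp]: "act_A (mat 1) T = T"
  by (simp add: act_A_def sum_mat_1_mult)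

lemma act_B_one [simp]: "act_B (mat 1) T = T"
  by (simp add: act_B_def sum_mat_1_mult)

lemma act_C_one [simp]: "act_C (mat 1) T = T"
  by (simp add: act_C_def sum_mat_1_mult)

lemma act_mult: "act (g ** g', h ** h', k ** k') T = act (g, h, k) (act (g', h', k') T)"
  by (simp add: act_eq_act_A_B_C act_A_mult act_B_mult act_C_mult
      act_A_act_B_commute act_A_act_C_commute act_B_act_C_commute)

lemma act_one [simp]: "act (mat 1, mat 1, mat 1) T = T"
  by (simp add: act_eq_act_A_B_C)

lemma act_A_B_nth:
  "act_A u (act_B v T) i j l =
     u$i$0 * (v$j$0 * T 0 0 l + v$j$1 * T 0 1 l) + u$i$1 * (v$j$0 * T 1 0 l + v$j$1 * T 1 1 l)"
  by (simp add: act_A_def act_B_def sum_2')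

section \<open>Polynomial curves\<close>

definition complex_polyfun :: "(complex \<Rightarrow> complex) \<Rightarrow> bool" where
  "complex_polyfun f \<longleftrightarrow> (\<exists>p. \<forall>z. f z = poly p z)"

lemma complex_polyfun_const [intro]: "complex_polyfun (\<lambda>z. c)"
  unfolding complex_polyfun_def by (rule exI[of _ "[:c:]"]) simp

lemma complex_polyfun_id [intro]: "complex_polyfun (\<lambda>z. z)"
  unfolding complex_polyfun_def by (rule exI[of _ "[:0, 1:]"]) simp

lemma complex_polyfun_add [intro]:
  "complex_polyfun f \<Longrightarrow> complex_polyfun g \<Longrightarrow> complex_polyfun (\<lambda>z. f z + g z)"
  unfolding complex_polyfun_def by (metis poly_add)

lemma complex_polyfun_diff [intro]:
  "complex_polyfun f \<Longrightarrow> complex_polyfun g \<Longrightarrow> complex_polyfun (\<lambda>z. f z - g z)"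
  unfolding complex_polyfun_def by (metis poly_diff)

lemma complex_polyfun_mult [intro]:
  "complex_polyfun f \<Longrightarrow> complex_polyfun g \<Longrightarrow> complex_polyfun (\<lambda>z. f z * g z)"
  unfolding complex_polyfun_def by (metis poly_mult)

lemma complex_polyfun_minus [intro]: "complex_polyfun f \<Longrightarrow> complex_polyfun (\<lambda>z. - f z)"
  unfolding complex_polyfun_def by (metis poly_minus)

lemma complex_polyfun_sum [intro]:
  assumes "\<And>i. i \<in> A \<Longrightarrow> complex_polyfun (f i)"
  shows "complex_polyfun (\<lambda>z. \<Sum>i\<in>A. f i z)"
proof -
  obtain P where "\<forall>i\<in>A. \<forall>z. f i z = poly (P i) z"
    using assms unfolding complex_polyfun_def by metis
  then show ?thesis
    unfolding complex_polyfun_def by (intro exI[of _ "\<Sum>i\<in>A. P i"]) (simp add: poly_sum)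
qed

lemma complex_polyfun_prod [intro]:
  assumes "\<And>i. i \<in> A \<Longrightarrow> complex_polyfun (f i)"
  shows "complex_polyfun (\<lambda>z. \<Prod>i\<in>A. f i z)"
proof -
  obtain P where "\<forall>i\<in>A. \<forall>z. f i z = poly (P i) z"
    using assms unfolding complex_polyfun_def by metis
  then show ?thesis
    unfolding complex_polyfun_def by (intro exI[of _ "\<Prod>i\<in>A. P i"]) (simp add: poly_prod)
qed

lemma finite_zeros_complex_polyfun:
  assumes "complex_polyfun f" "f 0 \<noteq> 0"
  shows "finite {z. f z = 0}"
proof -
  obtain p where p: "\<And>z. f z = poly p z"
    using assms(1) unfolding complex_polyfun_def by blast
  with assms(2) have "p \<noteq> 0" by auto
  then show ?thesis using poly_roots_finite[of p] by (simp add: p)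
qed

lemma continuous_on_complex_polyfun: "complex_polyfun f \<Longrightarrow> continuous_on S f"
  unfolding complex_polyfun_def by (metis continuous_on_poly continuous_on_id continuous_on_cong)

definition polyfun_matrix :: "(complex \<Rightarrow> complex^'m^'k) \<Rightarrow> bool" where
  "polyfun_matrix M \<longleftrightarrow> (\<forall>i j. complex_polyfun (\<lambda>z. M z $ i $ j))"

lemma complex_polyfun_det:
  "polyfun_matrix (M :: complex \<Rightarrow> complex^'m::finite^'m) \<Longrightarrow> complex_polyfun (\<lambda>z. det (M z))"
  unfolding det_def polyfun_matrix_def by (intro complex_polyfun_sum complex_polyfun_mult) auto

lemma continuous_on_polyfun_matrix:
  assumes "polyfun_matrix M"
  shows "continuous_on S M"
proof -
  have "continuous_on S (\<lambda>z. \<chi> i j. M z $ i $ j)"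
    using assms unfolding polyfun_matrix_def
    by (intro continuous_on_vec_lambda continuous_on_complex_polyfun) blast
  then show ?thesis by simp
qed

lemma continuous_on_inverse2:
  assumes "continuous_on S U" "\<And>z. z \<in> S \<Longrightarrow> det (U z) \<noteq> 0"
  shows "continuous_on S (\<lambda>z. inverse2 (U z) :: complex^2^2)"
proof -
  have entry: "continuous_on S (\<lambda>z. U z $ i $ j)" for i j
    by (intro continuous_on_component assms(1))
  have "continuous_on S (\<lambda>z. det (U z))"
    unfolding det_2' by (intro continuous_intros entry)
  then show ?thesis
    unfolding inverse2_def mat2_def using assms(2)
    by (intro continuous_on_vec_lambda, case_tac "i = 0"; case_tac "j = 0")
      (auto intro!: continuous_intros entry)
qed

definition polyfun_path :: "(complex \<Rightarrow> complex^'m^'m) \<Rightarrow> complex^'m^'m \<Rightarrow> bool" where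
  "polyfun_path U u \<longleftrightarrow> polyfun_matrix U \<and> U 0 = mat 1 \<and> U 1 = u"

definition mat_segment :: "complex^2^2 \<Rightarrow> complex \<Rightarrow> complex^2^2" where
  "mat_segment u z = (\<chi> a b. (1 - z) * mat 1 $ a $ b + z * u $ a $ b)"

lemma mat_segment_nth [simp]:
  "mat_segment u z $ 0 $ 0 = 1 - z + z * u$0$0" "mat_segment u z $ 0 $ 1 = z * u$0$1"
  "mat_segment u z $ 1 $ 0 = z * u$1$0" "mat_segment u z $ 1 $ 1 = 1 - z + z * u$1$1"
  by (simp_all add: mat_segment_def)

lemma polyfun_path_mat_segment: "polyfun_path (mat_segment u) u"
  unfolding polyfun_path_def polyfun_matrix_def
  by (auto simp: mat_segment_def mat2_eq_iff intro!: complex_polyfun_add complex_polyfun_mult)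

lemma polyfun_matrix_mat2:
  assumes "complex_polyfun a" "complex_polyfun b" "complex_polyfun c" "complex_polyfun d"
  shows "polyfun_matrix (\<lambda>z. mat2 (a z) (b z) (c z) (d z))"
  using assms unfolding polyfun_matrix_def by (simp add: forall_2')

lemma complex_polyfun_segment: "complex_polyfun (\<lambda>z. mat_segment u z $ i $ j)"
  using polyfun_path_mat_segment unfolding polyfun_path_def polyfun_matrix_def by blast

lemma connected_by_curves:
  fixes X :: "'a::topological_space set"
  assumes "e \<in> X"
    and curve: "\<And>x. x \<in> X \<Longrightarrow> \<exists>(\<gamma>::complex \<Rightarrow> 'a) F. finite F \<and> 0 \<notin> F \<and> 1 \<notin> F
      \<and> continuous_on (- F) \<gamma> \<and> \<gamma> 0 = e \<and> \<gamma> 1 = x \<and> \<gamma> ` (- F) \<subseteq> X"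
  shows "connected X"
proof -
  have "x \<in> connected_component_set X e" if x: "x \<in> X" for x
  proof -
    obtain \<gamma> :: "complex \<Rightarrow> 'a" and F where F: "finite F" "0 \<notin> F" "1 \<notin> F"
      and \<gamma>: "continuous_on (- F) \<gamma>" "\<gamma> 0 = e" "\<gamma> 1 = x" "\<gamma> ` (- F) \<subseteq> X"
      using curve[OF x] by blast
    have "connected (UNIV - F)"
      using F(1) by (intro connected_open_diff_countable) (auto simp: countable_finite)
    then have "connected (\<gamma> ` (- F))"
      using \<gamma>(1) by (intro connected_continuous_image) (simp_all add: Compl_eq_Diff_UNIV)
    moreover have "e \<in> \<gamma> ` (- F)"
      using F(2) \<gamma>(2) by (metis ComplI imageI)
    moreover have "x \<in> \<gamma> ` (- F)"
      using F(3) \<gamma>(3) by (metis ComplI imageI)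
    ultimately show ?thesis
      using \<gamma>(4) connected_component_def by (metis mem_Collect_eq)
  qed
  then have "connected_component_set X e = X"
    using connected_component_subset by (metis subsetI subset_antisym)
  then show ?thesis
    by (metis connected_connected_component)
qed

section \<open>Stabilisers through slices\<close>

lemma GLset_iff [simp]: "(g, h, k) \<in> GLset \<longleftrightarrow> det g \<noteq> 0 \<and> det h \<noteq> 0 \<and> det k \<noteq> 0"
  by (simp add: GLset_def invertible_det_nz)

lemma mem_stab_iff [simp]:
  "(g, h, k) \<in> stab T \<longleftrightarrow> det g \<noteq> 0 \<and> det h \<noteq> 0 \<and> det k \<noteq> 0 \<and> act (g, h, k) T = T"
  by (simp add: stab_def)

lemma act_fixes_iff:
  assumes "det g \<noteq> 0" "det h \<noteq> 0"
  shows "act (g, h, k) T = T \<longleftrightarrow> act_C k T = act_A (inverse2 g) (act_B (inverse2 h) T)"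
proof -
  have undo: "act_A (inverse2 g) (act_B (inverse2 h) (act_A g (act_B h X))) = X" for X
    using assms by (simp add: act_A_act_B_commute inverse2_left flip: act_A_mult act_B_mult)
  have redo: "act_A g (act_B h (act_A (inverse2 g) (act_B (inverse2 h) X))) = X" for X
    using assms by (simp add: act_A_act_B_commute inverse2_right flip: act_A_mult act_B_mult)
  show ?thesis
    unfolding act_eq_act_A_B_C by (metis undo redo)
qed

text \<open>The C-slices \<open>T(-,-,l)\<close>, \<open>l \<in> S\<close>, carry all of \<open>T\<close>, and the entry at position
  \<open>pos l\<close> separates slice \<open>l\<close> from the others; in particular these slices are linearly independent.\<close>
definition witnessed_slices :: "'n::finite tensor \<Rightarrow> 'n set \<Rightarrow> ('n \<Rightarrow> 2 \<times> 2) \<Rightarrow> bool" where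
  "witnessed_slices T S pos \<longleftrightarrow>
     (\<forall>l\<in>S. \<forall>l'\<in>S. T (fst (pos l)) (snd (pos l)) l' = (if l' = l then 1 else 0))
     \<and> (\<forall>i j l. l \<notin> S \<longrightarrow> T i j l = 0)"

definition absorbable :: "'n::finite tensor \<Rightarrow> complex^2^2 \<Rightarrow> complex^2^2 \<Rightarrow> bool" where
  "absorbable T u v \<longleftrightarrow> (\<exists>k. act_C k T = act_A u (act_B v T))"

text \<open>On the slices in \<open>S\<close> an absorbing \<open>k\<close> is forced: its column \<open>l'\<close> can be read off at the
  witness position \<open>pos l'\<close>. The remaining columns do not matter and are taken from the identity.\<close>
definition absorber ::
    "'n::finite tensor \<Rightarrow> 'n set \<Rightarrow> ('n \<Rightarrow> 2 \<times> 2) \<Rightarrow> complex^2^2 \<Rightarrow> complex^2^2 \<Rightarrow> complex^'n^'n"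
  where "absorber T S pos u v =
    (\<chi> l l'. if l' \<in> S then act_A u (act_B v T) (fst (pos l')) (snd (pos l')) l
             else if l = l' then 1 else 0)"

lemma act_C_witnessed:
  assumes "witnessed_slices T S pos"
  shows "act_C k T i j l = (\<Sum>l'\<in>S. k$l$l' * T i j l')"
  unfolding act_C_def
  by (rule sum.mono_neutral_right) (use assms in \<open>auto simp: witnessed_slices_def\<close>)

lemma act_A_B_outside_slices:
  assumes "witnessed_slices T S pos" "l \<notin> S"
  shows "act_A u (act_B v T) i j l = 0"
  using assms by (simp add: witnessed_slices_def act_A_B_nth)

lemma act_C_absorber_eq:
  assumes w: "witnessed_slices T S pos"
    and expand: "\<forall>l\<in>S. \<forall>i j. (\<Sum>l'\<in>S. act_A u (act_B v T) (fst (pos l')) (snd (pos l')) l * T i j l')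
                   = act_A u (act_B v T) i j l"
  shows "act_C (absorber T S pos u v) T = act_A u (act_B v T)"
proof (intro ext)
  fix i j l
  have "act_C (absorber T S pos u v) T i j l
        = (\<Sum>l'\<in>S. act_A u (act_B v T) (fst (pos l')) (snd (pos l')) l * T i j l')"
    unfolding act_C_witnessed[OF w] by (intro sum.cong) (auto simp: absorber_def)
  also have "\<dots> = act_A u (act_B v T) i j l"
    using expand act_A_B_outside_slices[OF w] by (cases "l \<in> S") auto
  finally show "act_C (absorber T S pos u v) T i j l = act_A u (act_B v T) i j l" .
qed

lemma act_C_at_witness:
  assumes "witnessed_slices T S pos" "l' \<in> S"
  shows "act_C k T (fst (pos l')) (snd (pos l')) l = k$l$l'"
proof -
  have "act_C k T (fst (pos l')) (snd (pos l')) l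
        = (\<Sum>l''\<in>S. if l'' = l' then k$l$l'' else 0)"
    unfolding act_C_witnessed[OF assms(1)]
    using assms unfolding witnessed_slices_def by (intro sum.cong) auto
  then show ?thesis
    using assms(2) by simp
qed

lemma absorbable_iff:
  assumes w: "witnessed_slices T S pos"
  shows "absorbable T u v \<longleftrightarrow>
    (\<forall>l\<in>S. \<forall>i j. (\<Sum>l'\<in>S. act_A u (act_B v T) (fst (pos l')) (snd (pos l')) l * T i j l')
                   = act_A u (act_B v T) i j l)"
proof
  assume "absorbable T u v"
  then obtain k where k: "act_C k T = act_A u (act_B v T)"
    unfolding absorbable_def by blast
  have "(\<Sum>l'\<in>S. act_A u (act_B v T) (fst (pos l')) (snd (pos l')) l * T i j l')
        = act_A u (act_B v T) i j l" for l i j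
    unfolding k[symmetric] act_C_witnessed[OF w, of k i j l]
    by (intro sum.cong) (simp_all add: act_C_at_witness[OF w])
  then show "\<forall>l\<in>S. \<forall>i j. (\<Sum>l'\<in>S. act_A u (act_B v T) (fst (pos l')) (snd (pos l')) l * T i j l')
                   = act_A u (act_B v T) i j l"
    by blast
next
  assume "\<forall>l\<in>S. \<forall>i j. (\<Sum>l'\<in>S. act_A u (act_B v T) (fst (pos l')) (snd (pos l')) l * T i j l')
                   = act_A u (act_B v T) i j l"
  then show "absorbable T u v"
    unfolding absorbable_def using act_C_absorber_eq[OF w] by blast
qed

lemma act_C_absorber:
  "witnessed_slices T S pos \<Longrightarrow> absorbable T u v
    \<Longrightarrow> act_C (absorber T S pos u v) T = act_A u (act_B v T)"
  by (simp add: act_C_absorber_eq absorbable_iff)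

lemma absorber_one:
  assumes "witnessed_slices T S pos"
  shows "absorber T S pos (mat 1) (mat 1) = mat 1"
proof -
  have "T (fst (pos l')) (snd (pos l')) l = (if l = l' then 1 else 0)" if "l' \<in> S" for l l'
    using assms that by (cases "l \<in> S") (auto simp: witnessed_slices_def)
  then show ?thesis
    unfolding absorber_def act_A_one act_B_one by (auto simp: vec_eq_iff mat_def)
qed

lemma polyfun_matrix_absorber:
  assumes "polyfun_matrix U" "polyfun_matrix V"
  shows "polyfun_matrix (\<lambda>z. absorber T S pos (U z) (V z))"
  unfolding polyfun_matrix_def
proof (intro allI)
  fix l l'
  have "complex_polyfun (\<lambda>z. act_A (U z) (act_B (V z) T) i j l)" for i j
    using assms unfolding act_A_def act_B_def polyfun_matrix_def
    by (auto intro!: complex_polyfun_sum complex_polyfun_mult)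
  then show "complex_polyfun (\<lambda>z. absorber T S pos (U z) (V z) $ l $ l')"
    by (cases "l' \<in> S") (auto simp: absorber_def)
qed

lemma absorber_curve:
  assumes w: "witnessed_slices T S pos"
    and U: "polyfun_path U u" and V: "polyfun_path V v"
    and absorb: "\<And>z. absorbable T (U z) (V z)"
    and k: "act_C k T = act_A u (act_B v T)"
  obtains K where "polyfun_path K k" "\<And>z. act_C (K z) T = act_A (U z) (act_B (V z) T)"
proof
  define A where "A z = absorber T S pos (U z) (V z)" for z
  txt \<open>Since \<open>k\<close> and \<open>A 1\<close> absorb the same pair, \<open>k - A 1\<close> acts on \<open>T\<close> as zero, so the
    correction term moves the endpoint to \<open>k\<close> without losing absorption.\<close>
  define K where "K z = (\<chi> a b. A z $ a $ b + z * (k $ a $ b - A 1 $ a $ b))" for z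
  have "polyfun_matrix A"
    using U V unfolding A_def polyfun_path_def by (intro polyfun_matrix_absorber) auto
  moreover have "A 0 = mat 1"
    using U V absorber_one[OF w] by (simp add: A_def polyfun_path_def)
  ultimately show "polyfun_path K k"
    unfolding polyfun_path_def polyfun_matrix_def
    by (auto simp: K_def vec_eq_iff intro!: complex_polyfun_add complex_polyfun_mult)
  have A: "act_C (A z) T = act_A (U z) (act_B (V z) T)" for z
    unfolding A_def by (intro act_C_absorber w absorb)
  have A1: "act_A (U 1) (act_B (V 1) T) = act_C k T"
    using U V k by (simp add: polyfun_path_def)
  fix z
  have "act_C (K z) T i j l = act_C (A z) T i j l + z * (act_C k T i j l - act_C (A 1) T i j l)"
    for i j l
    unfolding K_def act_C_def
    by (simp add: algebra_simps sum.distrib sum_subtractf sum_distrib_left)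
  then show "act_C (K z) T = act_A (U z) (act_B (V z) T)"
    by (simp add: A A1 fun_eq_iff)
qed

lemma stab_curve:
  assumes w: "witnessed_slices T S pos" and x: "(g, h, k) \<in> stab T"
    and U: "polyfun_path U (inverse2 g)" and V: "polyfun_path V (inverse2 h)"
    and absorb: "\<And>z. absorbable T (U z) (V z)"
  obtains K F where "polyfun_path K k" "finite F" "0 \<notin> F" "1 \<notin> F"
    "\<And>z. z \<notin> F \<Longrightarrow> det (U z) \<noteq> 0 \<and> det (V z) \<noteq> 0 \<and> (inverse2 (U z), inverse2 (V z), K z) \<in> stab T"
proof -
  have dets: "det g \<noteq> 0" "det h \<noteq> 0" "det k \<noteq> 0"
    using x by auto
  then have "act_C k T = act_A (inverse2 g) (act_B (inverse2 h) T)"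
    using x act_fixes_iff by auto
  then obtain K where K: "polyfun_path K k" and KUV: "\<And>z. act_C (K z) T = act_A (U z) (act_B (V z) T)"
    using absorber_curve[OF w U V absorb] by blast
  define f where "f z = det (U z) * det (V z) * det (K z)" for z
  define F where "F = {z. f z = 0}"
  have "complex_polyfun f"
    using U V K unfolding f_def polyfun_path_def by (intro complex_polyfun_mult complex_polyfun_det) auto
  moreover have "f 0 \<noteq> 0" "f 1 \<noteq> 0"
    using U V K dets by (auto simp: f_def polyfun_path_def det_inverse2)
  ultimately have "finite F" "0 \<notin> F" "1 \<notin> F"
    using finite_zeros_complex_polyfun by (auto simp: F_def)
  moreover have "det (U z) \<noteq> 0 \<and> det (V z) \<noteq> 0 \<and> (inverse2 (U z), inverse2 (V z), K z) \<in> stab T"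
    if "z \<notin> F" for z
  proof -
    have "det (U z) \<noteq> 0" "det (V z) \<noteq> 0" "det (K z) \<noteq> 0"
      using that by (auto simp: F_def f_def)
    then show ?thesis
      using KUV[of z] act_fixes_iff[of "inverse2 (U z)" "inverse2 (V z)" "K z" T]
      by (simp add: det_inverse2 inverse2_inverse2)
  qed
  ultimately show ?thesis
    using that K by blast
qed

lemma connected_stab_part:
  assumes w: "witnessed_slices T S pos" and "Q (mat 1) (mat 1)"
    and paths: "\<And>u v. det u \<noteq> 0 \<Longrightarrow> det v \<noteq> 0 \<Longrightarrow> absorbable T u v \<Longrightarrow> Q u v \<Longrightarrow>
      \<exists>U V. polyfun_path U u \<and> polyfun_path V v \<and> (\<forall>z. absorbable T (U z) (V z) \<and> Q (U z) (V z))"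
  shows "connected {x \<in> stab T. Q (inverse2 (fst x)) (inverse2 (fst (snd x)))}"
    (is "connected ?X")
proof (rule connected_by_curves)
  show "(mat 1, mat 1, mat 1) \<in> ?X"
    using assms(2) by simp
next
  fix x assume "x \<in> ?X"
  then obtain g h k where x: "x = (g, h, k)" "(g, h, k) \<in> stab T"
    and Q: "Q (inverse2 g) (inverse2 h)"
    by (cases x) auto
  then have dets: "det g \<noteq> 0" "det h \<noteq> 0"
    by auto
  have "absorbable T (inverse2 g) (inverse2 h)"
    using x(2) act_fixes_iff[OF dets, of k T] unfolding absorbable_def by auto
  moreover have "det (inverse2 g) \<noteq> 0" "det (inverse2 h) \<noteq> 0"
    using dets by (simp_all add: det_inverse2)
  ultimately obtain U V where U: "polyfun_path U (inverse2 g)" and V: "polyfun_path V (inverse2 h)"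
    and UV: "\<And>z. absorbable T (U z) (V z) \<and> Q (U z) (V z)"
    using paths Q by blast
  obtain K F where K: "polyfun_path K k" and F: "finite F" "0 \<notin> F" "1 \<notin> F"
    and in_stab: "\<And>z. z \<notin> F \<Longrightarrow> det (U z) \<noteq> 0 \<and> det (V z) \<noteq> 0 \<and> (inverse2 (U z), inverse2 (V z), K z) \<in> stab T"
    using stab_curve[OF w x(2) U V] UV by blast
  define \<gamma> where "\<gamma> z = (inverse2 (U z), inverse2 (V z), K z)" for z
  have "continuous_on (- F) \<gamma>"
    unfolding \<gamma>_def using U V K in_stab
    by (intro continuous_on_Pair continuous_on_inverse2 continuous_on_polyfun_matrix)
      (auto simp: polyfun_path_def)
  moreover have "\<gamma> 0 = (mat 1, mat 1, mat 1)" "\<gamma> 1 = x"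
    using U V K dets x by (simp_all add: \<gamma>_def polyfun_path_def inverse2_inverse2)
  moreover have "\<gamma> ` (- F) \<subseteq> ?X"
    using in_stab UV by (auto simp: \<gamma>_def inverse2_inverse2)
  ultimately show "\<exists>(\<gamma>::complex \<Rightarrow> _) F. finite F \<and> 0 \<notin> F \<and> 1 \<notin> F \<and> continuous_on (- F) \<gamma>
      \<and> \<gamma> 0 = (mat 1, mat 1, mat 1) \<and> \<gamma> 1 = x \<and> \<gamma> ` (- F) \<subseteq> ?X"
    using F by (intro exI[of _ \<gamma>] exI[of _ F] conjI)
qed

lemma connected_stab:
  assumes "witnessed_slices T S pos"
    and "\<And>u v. det u \<noteq> 0 \<Longrightarrow> det v \<noteq> 0 \<Longrightarrow> absorbable T u v \<Longrightarrow>
      \<exists>U V. polyfun_path U u \<and> polyfun_path V v \<and> (\<forall>z. absorbable T (U z) (V z))"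
  shows "connected (stab T)"
proof -
  have "connected {x \<in> stab T. (\<lambda>_ _. True) (inverse2 (fst x)) (inverse2 (fst (snd x)))}"
    by (rule connected_stab_part[OF assms(1)]) (use assms(2) in auto)
  then show ?thesis
    by simp
qed

lemma connected_stab_segments:
  assumes "witnessed_slices T S pos"
    and "\<And>u v z. det u \<noteq> 0 \<Longrightarrow> det v \<noteq> 0 \<Longrightarrow> absorbable T u v \<Longrightarrow>
      absorbable T (mat_segment u z) (mat_segment v z)"
  shows "connected (stab T)"
proof (rule connected_stab[OF assms(1)])
  fix u v :: "complex^2^2"
  assume "det u \<noteq> 0" "det v \<noteq> 0" "absorbable T u v"
  then show "\<exists>U V. polyfun_path U u \<and> polyfun_path V v \<and> (\<forall>z. absorbable T (U z) (V z))"
    using assms(2) polyfun_path_mat_segment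
    by (intro exI[of _ "mat_segment u"] exI[of _ "mat_segment v"]) simp
qed

section \<open>Moving along an orbit\<close>

lemma matrix_inv_right: "invertible A \<Longrightarrow> A ** matrix_inv A = mat 1"
  unfolding matrix_inv_def invertible_def by (rule someI2_ex) auto

lemma matrix_inv_left: "invertible A \<Longrightarrow> matrix_inv A ** A = mat 1"
  unfolding matrix_inv_def invertible_def by (rule someI2_ex) auto

lemma invertible_matrix_inv: "invertible A \<Longrightarrow> invertible (matrix_inv A)"
  using matrix_inv_left matrix_inv_right invertible_def by blast

lemma conj_matrix_cancel:
  fixes a g :: "'a::field^'n::finite^'n"
  assumes "invertible a"
  shows "matrix_inv a ** (a ** g ** matrix_inv a) ** a = g"
    "a ** (matrix_inv a ** g ** a) ** matrix_inv a = g"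
proof -
  have "matrix_inv a ** (a ** g ** matrix_inv a) ** a = (matrix_inv a ** a) ** g ** (matrix_inv a ** a)"
    "a ** (matrix_inv a ** g ** a) ** matrix_inv a = (a ** matrix_inv a) ** g ** (a ** matrix_inv a)"
    by (simp_all add: matrix_mul_assoc)
  then show "matrix_inv a ** (a ** g ** matrix_inv a) ** a = g"
    "a ** (matrix_inv a ** g ** a) ** matrix_inv a = g"
    using assms by (simp_all add: matrix_inv_left matrix_inv_right)
qed

lemma unconj_matrix_mult:
  fixes a g g' :: "'a::field^'n::finite^'n"
  assumes "invertible a"
  shows "matrix_inv a ** (g ** g') ** a = (matrix_inv a ** g ** a) ** (matrix_inv a ** g' ** a)"
proof -
  have "(matrix_inv a ** g ** a) ** (matrix_inv a ** g' ** a) = matrix_inv a ** g ** (a ** matrix_inv a) ** g' ** a"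
    by (simp add: matrix_mul_assoc)
  then show ?thesis
    using assms by (simp add: matrix_inv_right matrix_mul_assoc)
qed

lemma invertible_conj_matrix_iff:
  fixes a g :: "'a::field^'n::finite^'n"
  assumes "invertible a"
  shows "invertible (a ** g ** matrix_inv a) \<longleftrightarrow> invertible g"
  using assms conj_matrix_cancel(1)[OF assms, of g]
  by (metis invertible_matrix_inv invertible_mult)

definition conj_GL :: "'n::finite glelem \<Rightarrow> 'n glelem \<Rightarrow> 'n glelem" where
  "conj_GL y x = (case y of (a, b, c) \<Rightarrow> case x of (g, h, k) \<Rightarrow>
     (a ** g ** matrix_inv a, b ** h ** matrix_inv b, c ** k ** matrix_inv c))"

definition unconj_GL :: "'n::finite glelem \<Rightarrow> 'n glelem \<Rightarrow> 'n glelem" where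
  "unconj_GL y x = (case y of (a, b, c) \<Rightarrow> case x of (g, h, k) \<Rightarrow>
     (matrix_inv a ** g ** a, matrix_inv b ** h ** b, matrix_inv c ** k ** c))"

lemma unconj_conj_GL:
  assumes "y \<in> GLset"
  shows "unconj_GL y (conj_GL y x) = x" "conj_GL y (unconj_GL y x) = x"
  using assms by (auto simp: conj_GL_def unconj_GL_def GLset_def conj_matrix_cancel split: prod.splits)

lemma act_conj_GL:
  assumes "y \<in> GLset"
  shows "act (conj_GL y x) (act y T) = act y (act x T)"
proof -
  obtain a b c g h k where y: "y = (a, b, c)" and x: "x = (g, h, k)"
    by (cases y, cases x) auto
  have "invertible a" "invertible b" "invertible c"
    using assms y by (auto simp: GLset_def)
  then have "a ** g ** matrix_inv a ** a = a ** g" "b ** h ** matrix_inv b ** b = b ** h"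
    "c ** k ** matrix_inv c ** c = c ** k"
    by (simp_all add: matrix_inv_left flip: matrix_mul_assoc)
  then show ?thesis
    by (simp add: x y conj_GL_def flip: act_mult)
qed

lemma act_GL_cancel:
  assumes "y \<in> GLset" "act y T = act y T'"
  shows "T = T'"
proof -
  obtain a b c where y: "y = (a, b, c)"
    by (cases y) auto
  have "invertible a" "invertible b" "invertible c"
    using assms y by (auto simp: GLset_def)
  then have "act (matrix_inv a, matrix_inv b, matrix_inv c) (act y S) = S" for S
    by (simp add: y matrix_inv_left flip: act_mult)
  then show ?thesis
    by (metis assms(2))
qed

lemma conj_GL_in_GLset_iff:
  assumes "y \<in> GLset"
  shows "conj_GL y x \<in> GLset \<longleftrightarrow> x \<in> GLset"
  using assms by (auto simp: conj_GL_def GLset_def invertible_conj_matrix_iff split: prod.splits)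

lemma conj_GL_mem_stab_act_iff:
  assumes "y \<in> GLset"
  shows "conj_GL y x \<in> stab (act y T) \<longleftrightarrow> x \<in> stab T"
  using assms act_GL_cancel[OF assms] unfolding stab_def
  by (auto simp: act_conj_GL conj_GL_in_GLset_iff)

lemma unconj_GL_mem_stab_iff:
  assumes "y \<in> GLset"
  shows "unconj_GL y x \<in> stab T \<longleftrightarrow> x \<in> stab (act y T)"
  using conj_GL_mem_stab_act_iff[OF assms, of "unconj_GL y x"] by (simp add: unconj_conj_GL assms)

lemma stab_act:
  assumes "y \<in> GLset"
  shows "stab (act y T) = conj_GL y ` stab T"
proof
  show "stab (act y T) \<subseteq> conj_GL y ` stab T"
  proof
    fix x assume "x \<in> stab (act y T)"
    then have "unconj_GL y x \<in> stab T"
      by (simp add: unconj_GL_mem_stab_iff assms)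
    then show "x \<in> conj_GL y ` stab T"
      by (metis assms image_eqI unconj_conj_GL(2))
  qed
  show "conj_GL y ` stab T \<subseteq> stab (act y T)"
    using conj_GL_mem_stab_act_iff[OF assms] by auto
qed

lemma unconj_GL_image_stab_act:
  assumes "y \<in> GLset"
  shows "unconj_GL y ` stab (act y T) = stab T"
  by (simp add: stab_act assms image_image unconj_conj_GL)

lemma stab_act_Int_vimage_unconj_GL:
  assumes y: "y \<in> GLset" and "A \<subseteq> stab T"
  shows "stab (act y T) \<inter> unconj_GL y -` A = conj_GL y ` A"
proof
  show "stab (act y T) \<inter> unconj_GL y -` A \<subseteq> conj_GL y ` A"
    by (metis (no_types, lifting) IntD2 image_eqI subsetI unconj_conj_GL(2) vimageE y)
  show "conj_GL y ` A \<subseteq> stab (act y T) \<inter> unconj_GL y -` A"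
    using assms(2) conj_GL_mem_stab_act_iff[OF y] by (auto simp: unconj_conj_GL y)
qed

lemma continuous_on_conj_GL: "continuous_on S (conj_GL y)"
  and continuous_on_unconj_GL: "continuous_on S (unconj_GL y)"
  unfolding conj_GL_def unconj_GL_def matrix_matrix_mult_def
  by (auto intro!: continuous_intros continuous_on_vec_lambda continuous_on_component
      split: prod.splits simp: case_prod_beta')

lemma connected_stab_act:
  "y \<in> GLset \<Longrightarrow> connected (stab T) \<Longrightarrow> connected (stab (act y T))"
  unfolding stab_act by (rule connected_continuous_image[OF continuous_on_conj_GL])

section \<open>The stabiliser as a topological group\<close>

lemma stab_group_simps [simp]:
  "carrier (stab_group T) = stab T"
  "one (stab_group T) = (mat 1, mat 1, mat 1)"
  "mult (stab_group T) (g, h, k) (g', h', k') = (g ** g', h ** h', k ** k')"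
  by (simp_all add: stab_group_def)

lemma group_stab_group: "group (stab_group T)"
proof (rule groupI)
  fix x y assume "x \<in> carrier (stab_group T)" "y \<in> carrier (stab_group T)"
  then show "x \<otimes>\<^bsub>stab_group T\<^esub> y \<in> carrier (stab_group T)"
    by (cases x, cases y) (auto simp: stab_def GLset_def invertible_mult act_mult)
next
  show "\<one>\<^bsub>stab_group T\<^esub> \<in> carrier (stab_group T)"
    by (simp add: stab_def GLset_def invertible_def)
next
  fix x y z
  show "x \<otimes>\<^bsub>stab_group T\<^esub> y \<otimes>\<^bsub>stab_group T\<^esub> z = x \<otimes>\<^bsub>stab_group T\<^esub> (y \<otimes>\<^bsub>stab_group T\<^esub> z)"
    by (cases x, cases y, cases z) (simp add: matrix_mul_assoc)
next
  fix x
  show "\<one>\<^bsub>stab_group T\<^esub> \<otimes>\<^bsub>stab_group T\<^esub> x = x"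
    by (cases x) simp
next
  fix x assume "x \<in> carrier (stab_group T)"
  then obtain g h k where x: "x = (g, h, k)" "invertible g" "invertible h" "invertible k"
    and fixes_T: "act (g, h, k) T = T"
    by (cases x) (auto simp: stab_def GLset_def)
  define x' where "x' = (matrix_inv g, matrix_inv h, matrix_inv k)"
  have "act x' T = act x' (act (g, h, k) T)"
    using fixes_T by simp
  also have "\<dots> = T"
    using x by (simp add: x'_def matrix_inv_left flip: act_mult)
  finally have "x' \<in> carrier (stab_group T)"
    using x by (simp add: x'_def stab_def GLset_def invertible_matrix_inv)
  moreover have "x' \<otimes>\<^bsub>stab_group T\<^esub> x = \<one>\<^bsub>stab_group T\<^esub>"
    using x by (simp add: x'_def matrix_inv_left)
  ultimately show "\<exists>y\<in>carrier (stab_group T). y \<otimes>\<^bsub>stab_group T\<^esub> x = \<one>\<^bsub>stab_group T\<^esub>"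
    by blast
qed

lemma unconj_GL_hom:
  assumes "y \<in> GLset"
  shows "unconj_GL y \<in> hom (stab_group (act y T)) (stab_group T)"
proof (rule homI)
  fix x assume "x \<in> carrier (stab_group (act y T))"
  then show "unconj_GL y x \<in> carrier (stab_group T)"
    by (simp add: unconj_GL_mem_stab_iff assms)
next
  fix x x'
  obtain a b c where "y = (a, b, c)" "invertible a" "invertible b" "invertible c"
    using assms by (cases y) (auto simp: GLset_def)
  then show "unconj_GL y (x \<otimes>\<^bsub>stab_group (act y T)\<^esub> x')
      = unconj_GL y x \<otimes>\<^bsub>stab_group T\<^esub> unconj_GL y x'"
    by (cases x, cases x') (simp add: unconj_GL_def unconj_matrix_mult)
qed

lemma connected_component_eq_clopen:
  assumes "connected K" "x \<in> K" "openin (top_of_set S) K" "closedin (top_of_set S) K"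
  shows "connected_component_set S x = K"
proof
  show "K \<subseteq> connected_component_set S x"
    using assms openin_imp_subset by (intro connected_component_maximal) auto
  let ?C = "connected_component_set S x"
  obtain U F where "open U" "closed F" "K = S \<inter> U" "K = S \<inter> F"
    using assms(3,4) by (auto simp: openin_open closedin_closed)
  moreover have "?C \<subseteq> S"
    by (rule connected_component_subset)
  ultimately have "openin (top_of_set ?C) (?C \<inter> K)" "closedin (top_of_set ?C) (?C \<inter> K)"
    by (auto simp: openin_open closedin_closed)
  moreover have "x \<in> ?C \<inter> K"
    using assms(2,3) openin_imp_subset by fastforce
  ultimately show "?C \<subseteq> K"
    using connected_connected_component[of S x] unfolding connected_clopen by blast
qed

lemma FactGroup_connected_component_iso:
  fixes G :: "('a::topological_space, 'b) monoid_scheme"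
  assumes hom: "group_hom G H \<psi>" "\<psi> ` carrier G = carrier H"
    and "connected (kernel G H \<psi>)" "openin (top_of_set (carrier G)) (kernel G H \<psi>)"
    "closedin (top_of_set (carrier G)) (kernel G H \<psi>)"
  shows "G Mod connected_component_set (carrier G) \<one>\<^bsub>G\<^esub> \<cong> H"
proof -
  have "\<one>\<^bsub>G\<^esub> \<in> kernel G H \<psi>"
    using hom(1) by (simp add: kernel_def group_hom.hom_one group_hom_def group.is_monoid)
  then show ?thesis
    using assms by (simp add: connected_component_eq_clopen group_hom.FactGroup_iso)
qed

lemma FactGroup_identity_component_stab_act_iso:
  assumes y: "y \<in> GLset"
    and hom: "group_hom (stab_group T) Z \<psi>" "\<psi> ` stab T = carrier Z"
    and kernel: "connected (kernel (stab_group T) Z \<psi>)"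
      "openin (top_of_set (stab T)) (kernel (stab_group T) Z \<psi>)"
      "closedin (top_of_set (stab T)) (kernel (stab_group T) Z \<psi>)"
  shows "stab_group (act y T) Mod identity_component (stab (act y T)) \<cong> Z"
proof -
  let ?G = "stab_group (act y T)" and ?K = "kernel (stab_group T) Z \<psi>"
  have maps: "unconj_GL y \<in> stab (act y T) \<rightarrow> stab T"
    using unconj_GL_mem_stab_iff[OF y] by auto
  have "\<psi> \<circ> unconj_GL y \<in> hom ?G Z"
    using hom_compose[OF unconj_GL_hom[OF y] group_hom.homh[OF hom(1)]] .
  then have gh: "group_hom ?G Z (\<psi> \<circ> unconj_GL y)"
    using hom(1) group_stab_group by (simp add: group_hom_def group_hom_axioms_def)
  have "(\<psi> \<circ> unconj_GL y) ` carrier ?G = \<psi> ` unconj_GL y ` stab (act y T)"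
    by (simp add: image_image)
  then have surj: "(\<psi> \<circ> unconj_GL y) ` carrier ?G = carrier Z"
    using hom(2) by (simp add: unconj_GL_image_stab_act[OF y])
  have ker: "kernel ?G Z (\<psi> \<circ> unconj_GL y) = stab (act y T) \<inter> unconj_GL y -` ?K"
    using maps by (auto simp: kernel_def)
  have "stab (act y T) \<inter> unconj_GL y -` ?K = conj_GL y ` ?K"
    by (rule stab_act_Int_vimage_unconj_GL[OF y]) (auto simp: kernel_def)
  then have "connected (stab (act y T) \<inter> unconj_GL y -` ?K)"
    using kernel(1) by (simp add: connected_continuous_image continuous_on_conj_GL)
  moreover have "openin (top_of_set (stab (act y T))) (stab (act y T) \<inter> unconj_GL y -` ?K)"
    by (rule continuous_openin_preimage[OF continuous_on_unconj_GL maps kernel(2)])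
  moreover have "closedin (top_of_set (stab (act y T))) (stab (act y T) \<inter> unconj_GL y -` ?K)"
    by (rule continuous_closedin_preimage_gen[OF continuous_on_unconj_GL maps kernel(3)])
  ultimately show ?thesis
    using FactGroup_connected_component_iso[OF gh surj] unfolding ker identity_component_def
    by simp
qed

section \<open>The orbit representatives\<close>

lemma sum_pure_nth: "sum_pure L i j l = (if (i, j, l) \<in> set L then 1 else 0)"
  by (simp add: sum_pure_def)

lemma connected_stab_O0: "connected (stab (sum_pure [] :: 'n::finite tensor))"
proof -
  let ?T = "sum_pure [] :: 'n tensor"
  have w: "witnessed_slices ?T {} (\<lambda>_. (0, 0))"
    by (simp add: witnessed_slices_def sum_pure_nth)
  show ?thesis
    by (rule connected_stab_segments[OF w]) (simp add: absorbable_iff[OF w])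
qed

lemma connected_stab_O1: "connected (stab (sum_pure [(0, 0, p)] :: 'n::finite tensor))"
proof -
  let ?T = "sum_pure [(0, 0, p)] :: 'n tensor"
  have w: "witnessed_slices ?T {p} (\<lambda>_. (0, 0))"
    by (simp add: witnessed_slices_def sum_pure_nth)
  have absorbable: "absorbable ?T u v \<longleftrightarrow> u$0$0 * v$1$0 = 0 \<and> u$1$0 * v$0$0 = 0 \<and> u$1$0 * v$1$0 = 0"
    for u v
    unfolding absorbable_iff[OF w] by (auto simp: act_A_B_nth sum_pure_nth forall_2')
  show ?thesis
  proof (rule connected_stab_segments[OF w])
    fix u v z
    assume "det u \<noteq> 0" "det v \<noteq> 0" "absorbable ?T u v"
    then have "u$1$0 = 0" "v$1$0 = 0"
      unfolding absorbable det_2' by (auto simp: mult_eq_0_iff)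
    then show "absorbable ?T (mat_segment u z) (mat_segment v z)"
      by (simp add: absorbable)
  qed
qed

lemma connected_stab_O3:
  assumes "p \<noteq> q"
  shows "connected (stab (sum_pure [(0, 0, p), (0, 1, q)] :: 'n::finite tensor))"
proof -
  let ?T = "sum_pure [(0, 0, p), (0, 1, q)] :: 'n tensor"
  have w: "witnessed_slices ?T {p, q} (\<lambda>l. if l = p then (0, 0) else (0, 1))"
    using assms by (auto simp: witnessed_slices_def sum_pure_nth)
  have absorbable: "absorbable ?T u v \<longleftrightarrow>
      u$1$0 * v$0$0 = 0 \<and> u$1$0 * v$1$0 = 0 \<and> u$1$0 * v$0$1 = 0 \<and> u$1$0 * v$1$1 = 0" for u v
    unfolding absorbable_iff[OF w] using assms by (auto simp: act_A_B_nth sum_pure_nth forall_2')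
  show ?thesis
  proof (rule connected_stab_segments[OF w])
    fix u v z
    assume "det u \<noteq> 0" "det v \<noteq> 0" "absorbable ?T u v"
    then have "u$1$0 = 0"
      unfolding absorbable det_2' by auto
    then show "absorbable ?T (mat_segment u z) (mat_segment v z)"
      by (simp add: absorbable)
  qed
qed

lemma connected_stab_O4:
  assumes "p \<noteq> q"
  shows "connected (stab (sum_pure [(0, 0, p), (1, 0, q)] :: 'n::finite tensor))"
proof -
  let ?T = "sum_pure [(0, 0, p), (1, 0, q)] :: 'n tensor"
  have w: "witnessed_slices ?T {p, q} (\<lambda>l. if l = p then (0, 0) else (1, 0))"
    using assms by (auto simp: witnessed_slices_def sum_pure_nth)
  have absorbable: "absorbable ?T u v \<longleftrightarrow>
      u$0$0 * v$1$0 = 0 \<and> u$1$0 * v$1$0 = 0 \<and> u$0$1 * v$1$0 = 0 \<and> u$1$1 * v$1$0 = 0" for u v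
    unfolding absorbable_iff[OF w] using assms by (auto simp: act_A_B_nth sum_pure_nth forall_2')
  show ?thesis
  proof (rule connected_stab_segments[OF w])
    fix u v z
    assume "det u \<noteq> 0" "det v \<noteq> 0" "absorbable ?T u v"
    then have "v$1$0 = 0"
      unfolding absorbable det_2' by auto
    then show "absorbable ?T (mat_segment u z) (mat_segment v z)"
      by (simp add: absorbable)
  qed
qed

lemma connected_stab_O7:
  assumes "p \<noteq> q" "p \<noteq> r" "q \<noteq> r"
  shows "connected (stab (sum_pure [(0, 0, p), (0, 1, r), (1, 0, q)] :: 'n::finite tensor))"
proof -
  let ?T = "sum_pure [(0, 0, p), (0, 1, r), (1, 0, q)] :: 'n tensor"
  have w: "witnessed_slices ?T {p, q, r}
      (\<lambda>l. if l = p then (0, 0) else if l = q then (1, 0) else (0, 1))"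
    using assms by (auto simp: witnessed_slices_def sum_pure_nth)
  have absorbable: "absorbable ?T u v \<longleftrightarrow>
      u$1$0 * v$1$0 = 0 \<and> u$1$1 * v$1$0 = 0 \<and> u$1$0 * v$1$1 = 0" for u v
    unfolding absorbable_iff[OF w] using assms by (auto simp: act_A_B_nth sum_pure_nth forall_2')
  show ?thesis
  proof (rule connected_stab_segments[OF w])
    fix u v z
    assume "det u \<noteq> 0" "det v \<noteq> 0" "absorbable ?T u v"
    then have "u$1$0 = 0" "v$1$0 = 0"
      unfolding absorbable det_2' by (auto simp: mult_eq_0_iff)
    then show "absorbable ?T (mat_segment u z) (mat_segment v z)"
      by (simp add: absorbable)
  qed
qed

lemma connected_stab_O9:
  assumes "distinct [p, q, r, s]"
  shows "connected (stab (sum_pure [(0, 0, p), (0, 1, r), (1, 0, q), (1, 1, s)] :: 'n::finite tensor))"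
proof -
  let ?T = "sum_pure [(0, 0, p), (0, 1, r), (1, 0, q), (1, 1, s)] :: 'n tensor"
  have w: "witnessed_slices ?T {p, q, r, s}
      (\<lambda>l. if l = p then (0, 0) else if l = q then (1, 0) else if l = r then (0, 1) else (1, 1))"
    using assms by (auto simp: witnessed_slices_def sum_pure_nth)
  have "absorbable ?T u v" for u v
    unfolding absorbable_iff[OF w] using assms by (auto simp: act_A_B_nth sum_pure_nth forall_2')
  then show ?thesis
    by (rule connected_stab_segments[OF w])
qed

lemma connected_stab_O2: "connected (stab (sum_pure [(0, 0, p), (1, 1, p)] :: 'n::finite tensor))"
proof -
  let ?T = "sum_pure [(0, 0, p), (1, 1, p)] :: 'n tensor"
  have w: "witnessed_slices ?T {p} (\<lambda>_. (0, 0))"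
    by (simp add: witnessed_slices_def sum_pure_nth)
  have absorbable: "absorbable ?T u v \<longleftrightarrow>
      u$1$0 * v$0$0 + u$1$1 * v$0$1 = 0 \<and> u$0$0 * v$1$0 + u$0$1 * v$1$1 = 0
      \<and> u$0$0 * v$0$0 + u$0$1 * v$0$1 = u$1$0 * v$1$0 + u$1$1 * v$1$1" for u v
    unfolding absorbable_iff[OF w] by (auto simp: act_A_B_nth sum_pure_nth forall_2')
  show ?thesis
  proof (rule connected_stab[OF w])
    fix u v :: "complex^2^2"
    assume du: "det u \<noteq> 0" and "absorbable ?T u v"
    then have eqs: "u$1$0 * v$0$0 + u$1$1 * v$0$1 = 0" "u$0$0 * v$1$0 + u$0$1 * v$1$1 = 0"
      "u$0$0 * v$0$0 + u$0$1 * v$0$1 = u$1$0 * v$1$0 + u$1$1 * v$1$1"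
      by (simp_all add: absorbable)
    txt \<open>The equations say \<open>u v\<^sup>T = \<rho> I\<close>, so \<open>v\<close> is a multiple of the cofactor matrix of \<open>u\<close>;
      the path scales the cofactor matrix of the segment from \<open>I\<close> to \<open>u\<close>.\<close>
    define \<rho> where "\<rho> = u$0$0 * v$0$0 + u$0$1 * v$0$1"
    define \<mu> where "\<mu> = \<rho> / det u"
    have "v$0$0 * det u = \<rho> * u$1$1" "v$0$1 * det u = - \<rho> * u$1$0"
      "v$1$0 * det u = - \<rho> * u$0$1" "v$1$1 * det u = \<rho> * u$0$0"
      unfolding det_2' \<rho>_def using eqs by algebra+
    then have v: "v = mat2 (\<mu> * u$1$1) (- \<mu> * u$1$0) (- \<mu> * u$0$1) (\<mu> * u$0$0)"
      using du by (simp add: mat2_eq_iff \<mu>_def field_simps)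
    define V where "V z = (let s = 1 - z + z * \<mu>; w = mat_segment u z in
      mat2 (s * w$1$1) (- s * w$1$0) (- s * w$0$1) (s * w$0$0))" for z
    have "polyfun_path V v"
      unfolding polyfun_path_def V_def Let_def
      by (auto simp: v mat2_eq_iff intro!: polyfun_matrix_mat2 complex_polyfun_mult
          complex_polyfun_add complex_polyfun_diff complex_polyfun_minus complex_polyfun_segment)
    moreover have "absorbable ?T (mat_segment u z) (V z)" for z
      by (simp add: absorbable V_def algebra_simps)
    ultimately show "\<exists>U V. polyfun_path U u \<and> polyfun_path V v \<and> (\<forall>z. absorbable ?T (U z) (V z))"
      using polyfun_path_mat_segment by blast
  qed
qed

lemma connected_stab_O5:
  assumes "p \<noteq> q"
  shows "connected (stab (sum_pure [(0, 0, p), (0, 1, q), (1, 0, q)] :: 'n::finite tensor))"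
proof -
  let ?T = "sum_pure [(0, 0, p), (0, 1, q), (1, 0, q)] :: 'n tensor"
  have w: "witnessed_slices ?T {p, q} (\<lambda>l. if l = p then (0, 0) else (0, 1))"
    using assms by (auto simp: witnessed_slices_def sum_pure_nth)
  have absorbable: "absorbable ?T u v \<longleftrightarrow>
      u$0$0 * v$1$0 = u$1$0 * v$0$0 \<and> u$1$0 * v$1$0 = 0
      \<and> u$0$0 * v$1$1 + u$0$1 * v$1$0 = u$1$0 * v$0$1 + u$1$1 * v$0$0
      \<and> u$1$0 * v$1$1 + u$1$1 * v$1$0 = 0" for u v
    unfolding absorbable_iff[OF w] using assms by (auto simp: act_A_B_nth sum_pure_nth forall_2')
  show ?thesis
  proof (rule connected_stab[OF w])
    fix u v :: "complex^2^2"
    assume du: "det u \<noteq> 0" and dv: "det v \<noteq> 0" and "absorbable ?T u v"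
    then have eqs: "u$0$0 * v$1$0 = u$1$0 * v$0$0" "u$1$0 * v$1$0 = 0"
      "u$0$0 * v$1$1 + u$0$1 * v$1$0 = u$1$0 * v$0$1 + u$1$1 * v$0$0"
      by (simp_all add: absorbable)
    have u10: "u$1$0 = 0"
    proof (rule ccontr)
      assume "u$1$0 \<noteq> 0"
      then have "v$1$0 = 0" "v$0$0 = 0"
        using eqs(1,2) by auto
      then show False
        using dv by (simp add: det_2')
    qed
    have u00: "u$0$0 \<noteq> 0"
      using du u10 by (auto simp: det_2')
    have v10: "v$1$0 = 0"
      using eqs(1) u10 u00 by simp
    define \<rho> where "\<rho> = v$0$0 / u$0$0"
    have v00: "v$0$0 = \<rho> * u$0$0"
      using u00 by (simp add: \<rho>_def)
    have v11: "v$1$1 = \<rho> * u$1$1"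
      using u00 eqs(3) u10 v10 by (simp add: \<rho>_def field_simps)
    define V where "V z = (let s = 1 - z + z * \<rho>; w = mat_segment u z in
      mat2 (s * w$0$0) (z * v$0$1) 0 (s * w$1$1))" for z
    have "polyfun_path V v"
      unfolding polyfun_path_def V_def Let_def
      by (auto simp: v00 v10 v11 mat2_eq_iff intro!: polyfun_matrix_mat2 complex_polyfun_mult
          complex_polyfun_add complex_polyfun_diff complex_polyfun_segment)
    moreover have "absorbable ?T (mat_segment u z) (V z)" for z
      by (simp add: absorbable V_def algebra_simps u10)
    ultimately show "\<exists>U V. polyfun_path U u \<and> polyfun_path V v \<and> (\<forall>z. absorbable ?T (U z) (V z))"
      using polyfun_path_mat_segment by blast
  qed
qed

lemma connected_stab_O8:
  assumes "p \<noteq> q" "p \<noteq> r" "q \<noteq> r"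
  shows "connected (stab (sum_pure [(0, 0, p), (0, 1, q), (1, 0, q), (1, 1, r)] :: 'n::finite tensor))"
proof -
  let ?T = "sum_pure [(0, 0, p), (0, 1, q), (1, 0, q), (1, 1, r)] :: 'n tensor"
  have w: "witnessed_slices ?T {p, q, r} (\<lambda>l. if l = p then (0, 0) else if l = q then (0, 1) else (1, 1))"
    using assms by (auto simp: witnessed_slices_def sum_pure_nth)
  have absorbable: "absorbable ?T u v \<longleftrightarrow>
      u$0$0 * v$1$0 = u$1$0 * v$0$0
      \<and> u$0$0 * v$1$1 + u$0$1 * v$1$0 = u$1$0 * v$0$1 + u$1$1 * v$0$0
      \<and> u$0$1 * v$1$1 = u$1$1 * v$0$1" for u v
    unfolding absorbable_iff[OF w] using assms by (auto simp: act_A_B_nth sum_pure_nth forall_2')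
  show ?thesis
  proof (rule connected_stab[OF w])
    fix u v :: "complex^2^2"
    assume du: "det u \<noteq> 0" and "absorbable ?T u v"
    then have eqs: "u$0$0 * v$1$0 = u$1$0 * v$0$0"
      "u$0$0 * v$1$1 + u$0$1 * v$1$0 = u$1$0 * v$0$1 + u$1$1 * v$0$0"
      "u$0$1 * v$1$1 = u$1$1 * v$0$1"
      by (simp_all add: absorbable)
    define \<rho> where "\<rho> = (v$0$0 * u$1$1 - v$1$0 * u$0$1) / det u"
    have "v$0$0 * det u = (v$0$0 * u$1$1 - v$1$0 * u$0$1) * u$0$0"
      "v$0$1 * det u = (v$0$0 * u$1$1 - v$1$0 * u$0$1) * u$0$1"
      "v$1$0 * det u = (v$0$0 * u$1$1 - v$1$0 * u$0$1) * u$1$0"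
      "v$1$1 * det u = (v$0$0 * u$1$1 - v$1$0 * u$0$1) * u$1$1"
      unfolding det_2' using eqs by algebra+
    then have v: "v$i$j = \<rho> * u$i$j" if "i = 0 \<or> i = 1" "j = 0 \<or> j = 1" for i j :: 2
      using that du by (auto simp: \<rho>_def field_simps)
    define V where "V z = (let s = 1 - z + z * \<rho>; w = mat_segment u z in
      mat2 (s * w$0$0) (s * w$0$1) (s * w$1$0) (s * w$1$1))" for z
    have "polyfun_path V v"
      unfolding polyfun_path_def V_def Let_def
      by (auto simp: v mat2_eq_iff intro!: polyfun_matrix_mat2 complex_polyfun_mult
          complex_polyfun_add complex_polyfun_diff complex_polyfun_segment)
    moreover have "absorbable ?T (mat_segment u z) (V z)" for z
      by (simp add: absorbable V_def algebra_simps)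
    ultimately show "\<exists>U V. polyfun_path U u \<and> polyfun_path V v \<and> (\<forall>z. absorbable ?T (U z) (V z))"
      using polyfun_path_mat_segment by blast
  qed
qed

lemma connected_stab_rep:
  fixes c :: "nat \<Rightarrow> 'n::finite"
  assumes inj: "inj_on c {1..CARD('n)}" and card: "CARD('n) \<ge> 3"
    and m: "m \<in> {0..9} - {6}" "m = 9 \<longrightarrow> CARD('n) \<ge> 4"
  shows "connected (stab (rep c m))"
proof -
  have distinct: "distinct (map c ns)" if "set ns \<subseteq> {1..CARD('n)}" "distinct ns" for ns
    using that inj_on_subset[OF inj] by (simp add: distinct_map)
  have "distinct (map c [1, 2, 3])"
    using card by (intro distinct) auto
  then have c: "c 1 \<noteq> c 2" "c 1 \<noteq> c 3" "c 2 \<noteq> c 3"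
    by auto
  consider "m = 0" | "m = 1" | "m = 2" | "m = 3" | "m = 4" | "m = 5" | "m = 7" | "m = 8" | "m = 9"
    using m(1) by fastforce
  then show ?thesis
  proof cases
    case 9
    then have "distinct (map c [1, 2, 3, 4])"
      using m(2) by (intro distinct) auto
    then show ?thesis
      using connected_stab_O9 9 by (simp add: rep_def)
  qed (use c connected_stab_O0 connected_stab_O1 connected_stab_O2 connected_stab_O3 connected_stab_O4
      connected_stab_O5 connected_stab_O7 connected_stab_O8 in \<open>simp_all add: rep_def\<close>)
qed

section \<open>The orbit \<open>O\<^sub>6\<close>\<close>

definition diagonal2 :: "complex^2^2 \<Rightarrow> bool" where
  "diagonal2 u \<longleftrightarrow> u$0$1 = 0 \<and> u$1$0 = 0"

definition antidiagonal2 :: "complex^2^2 \<Rightarrow> bool" where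
  "antidiagonal2 u \<longleftrightarrow> u$0$0 = 0 \<and> u$1$1 = 0"

lemma diagonal2_inverse2: "det u \<noteq> 0 \<Longrightarrow> diagonal2 (inverse2 u) \<longleftrightarrow> diagonal2 u"
  by (auto simp: diagonal2_def)

lemma antidiagonal2_inverse2: "det u \<noteq> 0 \<Longrightarrow> antidiagonal2 (inverse2 u) \<longleftrightarrow> antidiagonal2 u"
  by (auto simp: antidiagonal2_def)

lemma diagonal2_nonzero: "det u \<noteq> 0 \<Longrightarrow> diagonal2 u \<Longrightarrow> u$0$0 \<noteq> 0 \<and> u$1$1 \<noteq> 0"
  by (auto simp: diagonal2_def det_2')

lemma antidiagonal2_nonzero: "det u \<noteq> 0 \<Longrightarrow> antidiagonal2 u \<Longrightarrow> u$0$1 \<noteq> 0 \<and> u$1$0 \<noteq> 0"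
  by (auto simp: antidiagonal2_def det_2')

definition transposition_matrix :: "'n \<Rightarrow> 'n \<Rightarrow> complex^'n^'n" where
  "transposition_matrix a b = (\<chi> i. mat 1 $ Transposition.transpose a b i)"

lemma det_transposition_matrix: "det (transposition_matrix a b) \<noteq> 0"
  unfolding transposition_matrix_def
  by (simp add: det_permute_rows permutes_swap_id sign_swap_id)

lemma act_C_transposition_matrix:
  "act_C (transposition_matrix a b) T i j l = T i j (Transposition.transpose a b l)"
proof -
  have "act_C (transposition_matrix a b) T i j l
        = (\<Sum>l'\<in>UNIV. if Transposition.transpose a b l = l' then T i j l' else 0)"
    unfolding act_C_def transposition_matrix_def by (intro sum.cong) (auto simp: mat_def)
  then show ?thesis
    by simp
qed

text \<open>On the stabiliser of \<open>O\<^sub>6\<close>, where \<open>g\<close> is either diagonal or antidiagonal, this records which.\<close>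
definition swap_index :: "'n::finite glelem \<Rightarrow> int" where
  "swap_index x = (if fst x $ 0 $ 1 = 0 then 0 else 1)"

lemma diagonal2_or_antidiagonal2_mult:
  fixes g g' :: "complex^2^2"
  assumes "det g \<noteq> 0" "det g' \<noteq> 0"
    and "diagonal2 g \<or> antidiagonal2 g" "diagonal2 g' \<or> antidiagonal2 g'"
  shows "(g ** g') $ 0 $ 1 = 0 \<longleftrightarrow> (g $ 0 $ 1 = 0 \<longleftrightarrow> g' $ 0 $ 1 = 0)"
proof -
  have "(g ** g') $ 0 $ 1 = g$0$0 * g'$0$1 + g$0$1 * g'$1$1"
    by (simp add: matrix_matrix_mult_2')
  with assms(3,4) show ?thesis
    using diagonal2_nonzero[OF assms(1)] diagonal2_nonzero[OF assms(2)]
      antidiagonal2_nonzero[OF assms(1)] antidiagonal2_nonzero[OF assms(2)]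
    unfolding diagonal2_def antidiagonal2_def by (elim disjE) auto
qed

context
  fixes p q :: "'n::finite"
  assumes pq: "p \<noteq> q"
begin

abbreviation T6 :: "'n tensor" where
  "T6 \<equiv> sum_pure [(0, 0, p), (1, 1, q)]"

lemma witnessed_slices_O6:
  "witnessed_slices T6 {p, q} (\<lambda>l. if l = p then (0, 0) else (1, 1))"
  using pq by (auto simp: witnessed_slices_def sum_pure_nth)

lemma absorbable_O6_iff:
  "absorbable T6 u v \<longleftrightarrow>
     u$0$0 * v$1$0 = 0 \<and> u$1$0 * v$0$0 = 0 \<and> u$0$1 * v$1$1 = 0 \<and> u$1$1 * v$0$1 = 0"
  unfolding absorbable_iff[OF witnessed_slices_O6] using pq
  by (auto simp: act_A_B_nth sum_pure_nth forall_2')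

lemma absorbable_O6_cases:
  assumes du: "det u \<noteq> 0" and dv: "det v \<noteq> 0"
    and "absorbable T6 u v"
  shows "diagonal2 u \<and> diagonal2 v \<or> antidiagonal2 u \<and> antidiagonal2 v"
proof -
  have eqs: "u$0$0 * v$1$0 = 0" "u$1$0 * v$0$0 = 0" "u$0$1 * v$1$1 = 0" "u$1$1 * v$0$1 = 0"
    using assms(3) by (simp_all add: absorbable_O6_iff)
  show ?thesis
  proof (cases "u$0$0 = 0")
    case False
    then have "v$1$0 = 0" using eqs(1) by simp
    then have "v$0$0 \<noteq> 0" "v$1$1 \<noteq> 0" using dv by (auto simp: det_2')
    then have "u$1$0 = 0" "u$0$1 = 0" using eqs(2,3) by auto
    then have "u$1$1 \<noteq> 0" using du by (auto simp: det_2')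
    then show ?thesis
      using eqs \<open>v$1$0 = 0\<close> \<open>u$1$0 = 0\<close> \<open>u$0$1 = 0\<close> by (simp add: diagonal2_def)
  next
    case True
    then have "u$0$1 \<noteq> 0" "u$1$0 \<noteq> 0" using du by (auto simp: det_2')
    then have "v$0$0 = 0" "v$1$1 = 0" using eqs(2,3) by auto
    then have "v$0$1 \<noteq> 0" using dv by (auto simp: det_2')
    then show ?thesis
      using True eqs \<open>v$0$0 = 0\<close> \<open>v$1$1 = 0\<close> by (simp add: antidiagonal2_def)
  qed
qed

lemma stab_O6_cases:
  assumes "(g, h, k) \<in> stab T6"
  shows "diagonal2 g \<and> diagonal2 h \<or> antidiagonal2 g \<and> antidiagonal2 h"
proof -
  have dets: "det g \<noteq> 0" "det h \<noteq> 0"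
    using assms by auto
  then have "absorbable T6 (inverse2 g) (inverse2 h)"
    using assms act_fixes_iff[OF dets] unfolding absorbable_def by auto
  then show ?thesis
    using absorbable_O6_cases[of "inverse2 g" "inverse2 h"] dets
    by (simp add: det_inverse2 diagonal2_inverse2 antidiagonal2_inverse2)
qed

lemma connected_stab_O6_diagonal:
  "connected {x \<in> stab T6. diagonal2 (fst x)}"
proof -
  let ?Q = "\<lambda>u v. diagonal2 u \<and> diagonal2 v"
  have "connected {x \<in> stab T6. ?Q (inverse2 (fst x)) (inverse2 (fst (snd x)))}"
  proof (rule connected_stab_part[OF witnessed_slices_O6])
    fix u v :: "complex^2^2"
    assume "?Q u v"
    then have "absorbable T6 (mat_segment u z) (mat_segment v z) \<and> ?Q (mat_segment u z) (mat_segment v z)"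
      for z by (simp add: absorbable_O6_iff diagonal2_def)
    then show "\<exists>U V. polyfun_path U u \<and> polyfun_path V v
        \<and> (\<forall>z. absorbable T6 (U z) (V z) \<and> ?Q (U z) (V z))"
      using polyfun_path_mat_segment by blast
  qed (simp add: diagonal2_def)
  moreover have "?Q (inverse2 g) (inverse2 h) \<longleftrightarrow> diagonal2 g" if "(g, h, k) \<in> stab T6" for g h k
    using that stab_O6_cases[OF that] antidiagonal2_nonzero[of g]
    by (auto simp: diagonal2_inverse2 diagonal2_def antidiagonal2_def)
  then have "{x \<in> stab T6. ?Q (inverse2 (fst x)) (inverse2 (fst (snd x)))}
      = {x \<in> stab T6. diagonal2 (fst x)}"
    by fastforce
  ultimately show ?thesis
    by simp
qed

lemma swap_mem_stab_O6:
  "(mat2 0 1 1 0, mat2 0 1 1 0, transposition_matrix p q) \<in> stab T6"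
proof -
  have "act (mat2 0 1 1 0, mat2 0 1 1 0, transposition_matrix p q) T6 = T6"
  proof (intro ext)
    fix i j :: 2 and l :: 'n
    show "act (mat2 0 1 1 0, mat2 0 1 1 0, transposition_matrix p q) T6 i j l = T6 i j l"
      unfolding act_eq_act_A_B_C act_A_B_nth act_C_transposition_matrix
      using exhaust_2'[of i] exhaust_2'[of j] pq by (auto simp: sum_pure_nth transpose_eq_iff)
  qed
  then show ?thesis
    by (simp add: det_transposition_matrix det_2')
qed

lemma stab_O6_diagonal_iff:
  assumes "x \<in> stab T6"
  shows "diagonal2 (fst x) \<longleftrightarrow> fst x $ 0 $ 1 = 0" "diagonal2 (fst x) \<longleftrightarrow> fst x $ 0 $ 0 \<noteq> 0"
proof -
  obtain g h k where x: "x = (g, h, k)"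
    by (cases x)
  have gx: "(g, h, k) \<in> stab T6"
    using assms by (simp only: x)
  then have det: "det g \<noteq> 0"
    by simp
  from stab_O6_cases[OF gx] have "diagonal2 g \<or> antidiagonal2 g"
    by blast
  then consider "diagonal2 g" "g $ 0 $ 0 \<noteq> 0" | "antidiagonal2 g" "g $ 0 $ 1 \<noteq> 0"
    using diagonal2_nonzero[OF det] antidiagonal2_nonzero[OF det] by blast
  then show "diagonal2 (fst x) \<longleftrightarrow> fst x $ 0 $ 1 = 0" "diagonal2 (fst x) \<longleftrightarrow> fst x $ 0 $ 0 \<noteq> 0"
    by (cases; simp add: x diagonal2_def antidiagonal2_def)+
qed

lemma swap_index_hom: "group_hom (stab_group T6) (integer_mod_group 2) swap_index"
proof -
  let ?G = "stab_group T6"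
  have mult: "swap_index (x \<otimes>\<^bsub>?G\<^esub> x') = (swap_index x + swap_index x') mod 2"
    if "x \<in> carrier ?G" "x' \<in> carrier ?G" for x x'
  proof -
    obtain g h k g' h' k' where x: "x = (g, h, k)" "x' = (g', h', k')"
      by (cases x, cases x')
    then have "(g ** g') $ 0 $ 1 = 0 \<longleftrightarrow> (g $ 0 $ 1 = 0 \<longleftrightarrow> g' $ 0 $ 1 = 0)"
      using that stab_O6_cases[of g h k] stab_O6_cases[of g' h' k']
      by (intro diagonal2_or_antidiagonal2_mult) auto
    then show ?thesis
      by (simp add: x swap_index_def)
  qed
  have "swap_index \<in> hom ?G (integer_mod_group 2)"
    by (rule homI) (use mult in \<open>auto simp: swap_index_def carrier_integer_mod_group\<close>)
  then show ?thesis
    by (simp add: group_hom_def group_hom_axioms_def group_stab_group)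
qed

lemma swap_index_image: "swap_index ` stab T6 = carrier (integer_mod_group 2)"
proof -
  have "swap_index (mat 1, mat 1, mat 1) = 0" "swap_index (mat2 0 1 1 0, mat2 0 1 1 0, transposition_matrix p q) = 1"
    by (simp_all add: swap_index_def)
  moreover have "(mat 1, mat 1, mat 1) \<in> stab T6"
    by simp
  ultimately have "{0, 1} \<subseteq> swap_index ` stab T6"
    using swap_mem_stab_O6 by (auto intro: rev_image_eqI)
  moreover have "carrier (integer_mod_group 2) = {0, 1}"
    by (auto simp: carrier_integer_mod_group)
  ultimately show ?thesis
    by (auto simp: swap_index_def)
qed

lemma kernel_swap_index:
  "kernel (stab_group T6) (integer_mod_group 2) swap_index
    = {x \<in> stab T6. diagonal2 (fst x)}"
  using stab_O6_diagonal_iff(1) by (auto simp: kernel_def swap_index_def)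

lemma clopen_stab_O6_diagonal:
  "openin (top_of_set (stab T6)) {x \<in> stab T6. diagonal2 (fst x)}"
  "closedin (top_of_set (stab T6)) {x \<in> stab T6. diagonal2 (fst x)}"
proof -
  have entry: "continuous_on UNIV (\<lambda>x :: 'n glelem. fst x $ i $ j)" for i j
    by (intro continuous_on_component continuous_on_fst continuous_on_id)
  have "{x \<in> stab T6. diagonal2 (fst x)} = stab T6 \<inter> {x. fst x $ 0 $ 0 \<noteq> 0}"
    using stab_O6_diagonal_iff(2) by blast
  also have "openin (top_of_set (stab T6)) \<dots>"
    by (rule openin_open_Int[OF open_Collect_neq[OF entry continuous_on_const]])
  finally show "openin (top_of_set (stab T6)) {x \<in> stab T6. diagonal2 (fst x)}" .
  have "{x \<in> stab T6. diagonal2 (fst x)} = stab T6 \<inter> {x. fst x $ 0 $ 1 = 0}"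
    using stab_O6_diagonal_iff(1) by blast
  also have "closedin (top_of_set (stab T6)) \<dots>"
    by (rule closedin_closed_Int[OF closed_Collect_eq[OF entry continuous_on_const]])
  finally show "closedin (top_of_set (stab T6)) {x \<in> stab T6. diagonal2 (fst x)}" .
qed

lemma FactGroup_identity_component_stab_O6_iso:
  assumes "y \<in> GLset"
  shows "stab_group (act y T6) Mod identity_component (stab (act y T6)) \<cong> integer_mod_group 2"
  using connected_stab_O6_diagonal clopen_stab_O6_diagonal
  by (intro FactGroup_identity_component_stab_act_iso[OF assms swap_index_hom swap_index_image])
    (simp_all add: kernel_swap_index)

end

theorem proposition3p1:
  fixes c :: "nat \<Rightarrow> 'n::finite"
  assumes "CARD('n) \<ge> 3"
    and "bij_betw c {1..CARD('n)} UNIV"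
  shows "(\<forall>v \<in> GL_orbit (rep c 6).
            stab_group v Mod identity_component (stab v) \<cong> integer_mod_group 2)
       \<and> (\<forall>m \<in> {0..9} - {6::nat}. (m = 9 \<longrightarrow> CARD('n) \<ge> 4) \<longrightarrow>
            (\<forall>v \<in> GL_orbit (rep c m). connected (stab v)))"
proof (intro conjI ballI impI)
  have "c 1 \<noteq> c 2"
    using bij_betw_imp_inj_on[OF assms(2)] assms(1) by (auto dest: inj_onD)
  fix v assume "v \<in> GL_orbit (rep c 6)"
  then obtain y where "y \<in> GLset" "v = act y (sum_pure [(0, 0, c 1), (1, 1, c 2)])"
    by (auto simp: GL_orbit_def rep_def)
  then show "stab_group v Mod identity_component (stab v) \<cong> integer_mod_group 2"
    using FactGroup_identity_component_stab_O6_iso[OF \<open>c 1 \<noteq> c 2\<close>] by simp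
next
  fix m v
  assume m: "m \<in> {0..9} - {6::nat}" "m = 9 \<longrightarrow> CARD('n) \<ge> 4" and "v \<in> GL_orbit (rep c m)"
  then obtain y where y: "y \<in> GLset" "v = act y (rep c m)"
    unfolding GL_orbit_def by blast
  have "connected (stab (rep c m))"
    using bij_betw_imp_inj_on[OF assms(2)] assms(1) m by (rule connected_stab_rep)
  then show "connected (stab v)"
    unfolding y(2) using y(1) by (rule connected_stab_act[rotated])
qed

end
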